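(* Let $U=[a_1,b_1]\cup\dots\cup[a_k,b_k]\subseteq\mathbb{R}$ with $a_1\le b_1<a_2\le b_2<\dots<a_k\le b_k$. Suppose $f=\sum_{i=0}^{2d}a_i(x)y^i\in\mathbb{R}[x,y]$ is non-negative on $U\times\mathbb{R}$, has only finitely many zeros in $U\times\mathbb{R}$, and $a_{2d}(x)>0$ for all $x\in U$. Then there exists $\epsilon(x)\in\mathbb{R}[x]$ with $\epsilon(x)\ge0$ on $U$ such that $f(x,y)\ge\epsilon(x)(1+y^2)^d$ for all $(x,y)\in U\times\mathbb{R}$, and for each $x\in U$, $\epsilon(x)=0$ if and only if there exists $y\in\mathbb{R}$ with $f(x,y)=0$. *)

theory Defs
  imports Complex_Main "HOL-Computational_Algebra.Polynomial"
begin

definition biv_eval :: "(nat \<Rightarrow> real poly) \<Rightarrow> nat \<Rightarrow> real \<Rightarrow> real \<Rightarrow> real" where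
  "biv_eval c d x y = (\<Sum>i\<le>2*d. poly (c i) x * y ^ i)"

end

theory Submission
  imports Defs "Jordan_Normal_Form.Char_Poly" "HOL-Analysis.Analysis"
begin

text \<open>Regard f as a polynomial in y over \<open>\<real>[x]\<close> and let g be its y-derivative. Multiplication
by f on \<open>\<real>[x][y]/(g)\<close>, written in the basis 1, y, ..., y^(n-1) via pseudo-division, gives a
matrix whose characteristic polynomial annihilates (a power of the leading coefficient of g
times) every critical value f(x,y0). If q is its lowest nonzero coefficient, a root bound shows
that every nonzero critical value, in particular the positive minimum of f(x,-) over a fibre
without zeros, is at least |q(x)|/C. Near each of the finitely many x-coordinates z of zeros of f,
|q(x)| \<ge> \<gamma> |x - z|^e; away from them f is bounded below by compactness, and for large |y| the
leading term dominates. Hence \<epsilon> = \<delta> \<Prod>(x - z)^e over those z works for small \<delta> > 0 and even e.\<close>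

definition poly2 :: "'a::comm_ring_1 poly poly \<Rightarrow> 'a \<Rightarrow> 'a \<Rightarrow> 'a" where
  "poly2 p x y = poly (map_poly (\<lambda>q. poly q x) p) y"

lemma poly2_add: "poly2 (p + q) x y = poly2 p x y + poly2 q x y"
proof -
  interpret h: map_poly_comm_ring_hom "\<lambda>q. poly q x" by unfold_locales auto
  show ?thesis unfolding poly2_def by (simp add: h.hom_add)
qed

lemma poly2_mult: "poly2 (p * q) x y = poly2 p x y * poly2 q x y"
proof -
  interpret h: map_poly_comm_ring_hom "\<lambda>q. poly q x" by unfold_locales auto
  show ?thesis unfolding poly2_def by (simp add: h.hom_mult)
qed

lemma poly2_smult: "poly2 (Polynomial.smult c p) x y = poly c x * poly2 p x y"
  unfolding poly2_def by (simp add: poly_hom.map_poly_hom_smult)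

lemma poly2_monom: "poly2 (monom c i) x y = poly c x * y ^ i"
  unfolding poly2_def by (simp add: poly_hom.map_poly_hom_monom poly_monom)

lemma poly_eq_sum_lessThan:
  fixes p :: "'a::comm_ring_1 poly"
  assumes "degree p < n"
  shows "poly p y = (\<Sum>j<n. coeff p j * y ^ j)"
proof -
  have "poly p y = (\<Sum>j\<le>degree p. coeff p j * y ^ j)" by (rule poly_altdef)
  also have "\<dots> = (\<Sum>j<n. coeff p j * y ^ j)"
    by (rule sum.mono_neutral_left) (use assms in \<open>auto simp: coeff_eq_0\<close>)
  finally show ?thesis .
qed

lemma poly2_eq_sum_lessThan:
  assumes "degree p < n"
  shows "poly2 p x y = (\<Sum>j<n. poly (coeff p j) x * y ^ j)"
proof -
  have "degree (map_poly (\<lambda>q. poly q x) p) < n"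
    using assms degree_map_poly_le[of "\<lambda>q. poly q x" p] by linarith
  then show ?thesis unfolding poly2_def by (simp add: poly_eq_sum_lessThan coeff_map_poly)
qed

lemma poly2_char_poly_eq_0:
  fixes M :: "'a::field poly mat"
  assumes M: "M \<in> carrier_mat n n" and v: "v \<in> carrier_vec n" "v \<noteq> 0\<^sub>v n"
    and eigen: "map_mat (\<lambda>q. poly q x) M *\<^sub>v v = t \<cdot>\<^sub>v v"
  shows "poly2 (char_poly M) x t = 0"
proof -
  have Mx: "map_mat (\<lambda>q. poly q x) M \<in> carrier_mat n n" using M by simp
  then have "eigenvector (map_mat (\<lambda>q. poly q x) M) v t"
    using v eigen unfolding eigenvector_def by simp
  then have "poly (char_poly (map_mat (\<lambda>q. poly q x) M)) t = 0"
    using eigenvalue_root_char_poly[OF Mx] unfolding eigenvalue_def by blast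
  then show ?thesis
    unfolding poly2_def comm_ring_hom.char_poly_hom[OF poly_hom.comm_ring_hom_axioms M] .
qed

text \<open>M represents multiplication by F on \<open>'a[x][y]/(G)\<close> in the basis 1, y, ..., y^(n-1),
computed by pseudo-division; the powers of the leading coefficient L of G that pseudo-division
introduces are balanced to a common power K.\<close>

lemma exists_multiplication_matrix:
  fixes F G :: "'a::field poly poly"
  assumes deg: "degree G \<ge> 1"
  obtains M :: "'a poly mat" and K :: nat where "M \<in> carrier_mat (degree G) (degree G)"
    and "\<And>x y. poly2 G x y = 0 \<Longrightarrow> map_mat (\<lambda>q. poly q x) M *\<^sub>v Matrix.vec (degree G) (\<lambda>j. y ^ j)
           = (poly (lead_coeff G) x ^ K * poly2 F x y) \<cdot>\<^sub>v Matrix.vec (degree G) (\<lambda>j. y ^ j)"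
proof -
  define n where "n = degree G"
  define L where "L = lead_coeff G"
  have G0: "G \<noteq> 0" using deg by auto
  define Q where "Q i = fst (pseudo_divmod (monom 1 i * F) G)" for i
  define R where "R i = snd (pseudo_divmod (monom 1 i * F) G)" for i
  define e where "e i = Suc (degree (monom 1 i * F)) - degree G" for i
  define K where "K = (\<Sum>i<n. e i)"
  have divides: "Polynomial.smult (L ^ e i) (monom 1 i * F) = G * Q i + R i" for i
    using pseudo_divmod(1)[OF G0, of "monom 1 i * F" "Q i" "R i"]
    unfolding Q_def R_def e_def L_def by simp
  have deg_R: "degree (R i) < n" for i
    using pseudo_divmod(2)[OF G0, of "monom 1 i * F" "Q i" "R i"] deg
    unfolding Q_def R_def n_def by auto
  have e_le_K: "i < n \<Longrightarrow> e i \<le> K" for i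
    unfolding K_def by (rule member_le_sum) auto
  define M where "M = Matrix.mat n n (\<lambda>(i, j). L ^ (K - e i) * coeff (R i) j)"
  have M: "M \<in> carrier_mat n n" unfolding M_def by auto
  have eigen: "map_mat (\<lambda>q. poly q x) M *\<^sub>v Matrix.vec n (\<lambda>j. y ^ j)
      = (poly L x ^ K * poly2 F x y) \<cdot>\<^sub>v Matrix.vec n (\<lambda>j. y ^ j)"
    if root: "poly2 G x y = 0" for x y
  proof (rule eq_vecI)
    fix i assume "i < dim_vec ((poly L x ^ K * poly2 F x y) \<cdot>\<^sub>v Matrix.vec n (\<lambda>j. y ^ j))"
    then have i: "i < n" by simp
    have "poly2 (Polynomial.smult (L ^ e i) (monom 1 i * F)) x y = poly2 (G * Q i + R i) x y"
      by (simp add: divides)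
    then have "poly2 (R i) x y = poly L x ^ e i * (y ^ i * poly2 F x y)"
      using root by (simp add: poly2_smult poly2_mult poly2_add poly2_monom poly_power)
    moreover have "(map_mat (\<lambda>q. poly q x) M *\<^sub>v Matrix.vec n (\<lambda>j. y ^ j)) $ i
        = poly L x ^ (K - e i) * poly2 (R i) x y"
      using i M unfolding M_def poly2_eq_sum_lessThan[OF deg_R]
      by (simp add: scalar_prod_def atLeast0LessThan sum_distrib_left poly_power mult.assoc)
    ultimately show "(map_mat (\<lambda>q. poly q x) M *\<^sub>v Matrix.vec n (\<lambda>j. y ^ j)) $ i
        = ((poly L x ^ K * poly2 F x y) \<cdot>\<^sub>v Matrix.vec n (\<lambda>j. y ^ j)) $ i"
      using e_le_K[OF i] i by (simp add: power_add[symmetric] mult.assoc)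
  qed (use M in simp)
  show thesis
  proof (rule that)
    show "M \<in> carrier_mat (degree G) (degree G)" using M unfolding n_def .
    show "map_mat (\<lambda>q. poly q x) M *\<^sub>v Matrix.vec (degree G) (\<lambda>j. y ^ j)
      = (poly (lead_coeff G) x ^ K * poly2 F x y) \<cdot>\<^sub>v Matrix.vec (degree G) (\<lambda>j. y ^ j)"
      if "poly2 G x y = 0" for x y
      using eigen[OF that] unfolding n_def L_def .
  qed
qed

lemma exists_monic_eliminant:
  fixes F G :: "'a::field poly poly"
  assumes deg: "degree G \<ge> 1"
  obtains ch :: "'a poly poly" and K :: nat where "lead_coeff ch = 1"
    and "\<And>x y. poly2 G x y = 0 \<Longrightarrow> poly2 ch x (poly (lead_coeff G) x ^ K * poly2 F x y) = 0"
proof -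
  obtain M K where M: "M \<in> carrier_mat (degree G) (degree G)"
    and eigen: "\<And>x y. poly2 G x y = 0 \<Longrightarrow> map_mat (\<lambda>q. poly q x) M *\<^sub>v Matrix.vec (degree G) (\<lambda>j. y ^ j)
           = (poly (lead_coeff G) x ^ K * poly2 F x y) \<cdot>\<^sub>v Matrix.vec (degree G) (\<lambda>j. y ^ j)"
    using exists_multiplication_matrix[OF deg] by blast
  have nonzero: "Matrix.vec (degree G) (\<lambda>j. y ^ j) \<noteq> 0\<^sub>v (degree G)" for y :: 'a
  proof
    assume "Matrix.vec (degree G) (\<lambda>j. y ^ j) = 0\<^sub>v (degree G)"
    then have "Matrix.vec (degree G) (\<lambda>j. y ^ j) $ 0 = 0\<^sub>v (degree G) $ 0" by simp
    then show False using deg by simp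
  qed
  show thesis
  proof (rule that)
    show "lead_coeff (char_poly M) = 1" using degree_monic_char_poly[OF M] by simp
    show "poly2 (char_poly M) x (poly (lead_coeff G) x ^ K * poly2 F x y) = 0"
      if "poly2 G x y = 0" for x y
      by (rule poly2_char_poly_eq_0[OF M _ nonzero eigen[OF that]]) simp
  qed
qed

lemma abs_lowest_coeff_le_root:
  fixes p :: "real poly"
  assumes low: "\<And>j. j < j0 \<Longrightarrow> coeff p j = 0" and root: "poly p t = 0" and t: "t \<noteq> 0"
    and deg: "degree p \<le> D"
  shows "\<bar>coeff p j0\<bar> \<le> \<bar>t\<bar> * (\<Sum>j\<le>D. \<bar>coeff p j\<bar>)"
proof (cases "j0 \<le> D")
  case False
  then have "coeff p j0 = 0" using deg by (simp add: coeff_eq_0)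
  then show ?thesis by (simp add: sum_nonneg)
next
  case j0: True
  let ?a = "coeff p"
  show ?thesis
  proof (cases "\<bar>t\<bar> \<le> 1")
    case False
    have "\<bar>?a j0\<bar> \<le> (\<Sum>j\<le>D. \<bar>?a j\<bar>)" by (rule member_le_sum) (use j0 in auto)
    also have "\<dots> \<le> \<bar>t\<bar> * (\<Sum>j\<le>D. \<bar>?a j\<bar>)"
      using mult_right_mono[of 1 "\<bar>t\<bar>" "\<Sum>j\<le>D. \<bar>?a j\<bar>"] False by (simp add: sum_nonneg)
    finally show ?thesis .
  next
    case True
    have "0 = (\<Sum>j<Suc D. ?a j * t ^ j)"
      using root poly_eq_sum_lessThan[OF le_imp_less_Suc[OF deg], of t] by (simp del: sum.lessThan_Suc)
    also have "{..<Suc D} = {..<j0} \<union> {j0} \<union> {j0<..D}" using j0 by auto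
    also have "(\<Sum>j\<in>{..<j0} \<union> {j0} \<union> {j0<..D}. ?a j * t ^ j)
        = (\<Sum>j<j0. ?a j * t ^ j) + ?a j0 * t ^ j0 + (\<Sum>j\<in>{j0<..D}. ?a j * t ^ j)"
      by (subst sum.union_disjoint, auto)+
    finally have "?a j0 * t ^ j0 = - (\<Sum>j\<in>{j0<..D}. ?a j * t ^ j)" using low by simp
    then have "\<bar>?a j0\<bar> * \<bar>t\<bar> ^ j0 = \<bar>\<Sum>j\<in>{j0<..D}. ?a j * t ^ j\<bar>"
      by (metis abs_minus_cancel abs_mult power_abs)
    also have "\<dots> \<le> (\<Sum>j\<in>{j0<..D}. \<bar>?a j\<bar> * \<bar>t\<bar> ^ j)"
      by (rule order_trans[OF sum_abs]) (simp add: abs_mult power_abs)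
    also have "\<dots> \<le> (\<Sum>j\<in>{j0<..D}. \<bar>?a j\<bar> * \<bar>t\<bar> ^ Suc j0)"
      by (intro sum_mono mult_left_mono power_decreasing) (use True in auto)
    also have "\<dots> \<le> (\<Sum>j\<le>D. \<bar>?a j\<bar>) * \<bar>t\<bar> ^ Suc j0"
      unfolding sum_distrib_right[symmetric] by (intro mult_right_mono sum_mono2) auto
    finally have "\<bar>?a j0\<bar> * \<bar>t\<bar> ^ j0 \<le> (\<bar>t\<bar> * (\<Sum>j\<le>D. \<bar>?a j\<bar>)) * \<bar>t\<bar> ^ j0"
      by (simp add: algebra_simps)
    then show ?thesis using t by simp
  qed
qed

lemma continuous_on_compact_bounded_above:
  fixes g :: "'a::topological_space \<Rightarrow> real"
  assumes "compact S" "continuous_on S g"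
  obtains B where "\<And>x. x \<in> S \<Longrightarrow> g x \<le> B"
proof -
  have "bounded (g ` S)" by (rule compact_imp_bounded, rule compact_continuous_image) (use assms in auto)
  then obtain B where "\<forall>y\<in>g ` S. norm y \<le> B" by (auto simp: bounded_iff)
  then have "\<forall>x\<in>S. g x \<le> B" by fastforce
  with that show thesis by blast
qed

lemma continuous_on_compact_pos_lower_bound:
  fixes g :: "'a::topological_space \<Rightarrow> real"
  assumes "compact S" "continuous_on S g" "\<And>x. x \<in> S \<Longrightarrow> g x > 0"
  obtains m where "m > 0" "\<And>x. x \<in> S \<Longrightarrow> m \<le> g x"
proof (cases "S = {}")
  case True
  then show thesis using that[of 1] by auto
next
  case False
  from continuous_attains_inf[OF assms(1) False assms(2)] obtain x0
    where "x0 \<in> S" "\<forall>x\<in>S. g x0 \<le> g x" by blast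
  then show thesis using that[of "g x0"] assms(3) by auto
qed

lemma continuous_attains_global_min:
  fixes g :: "real \<Rightarrow> real"
  assumes cont: "continuous_on UNIV g" and far: "\<And>y. R \<le> \<bar>y\<bar> \<Longrightarrow> g 0 \<le> g y"
  shows "\<exists>y0. \<forall>y. g y0 \<le> g y"
proof -
  have "0 \<in> {-\<bar>R\<bar>..\<bar>R\<bar>}" by simp
  then obtain y0 where y0: "\<forall>y\<in>{-\<bar>R\<bar>..\<bar>R\<bar>}. g y0 \<le> g y"
    using continuous_attains_inf[OF compact_Icc _ continuous_on_subset[OF cont]] by blast
  have "g y0 \<le> g y" for y
  proof (cases "y \<in> {-\<bar>R\<bar>..\<bar>R\<bar>}")
    case False
    then have "g 0 \<le> g y" by (intro far) auto
    then show ?thesis using y0 \<open>0 \<in> {-\<bar>R\<bar>..\<bar>R\<bar>}\<close> by fastforce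
  qed (use y0 in auto)
  then show ?thesis by blast
qed

lemma poly_lower_bound_near_root:
  fixes q :: "real poly"
  assumes q: "q \<noteq> 0" and e: "order z q \<le> e"
  shows "\<exists>r>0. \<exists>\<gamma>>0. \<forall>x. \<bar>x - z\<bar> < r \<longrightarrow> \<gamma> * \<bar>x - z\<bar> ^ e \<le> \<bar>poly q x\<bar>"
proof -
  obtain s where qs: "q = [:-z, 1:] ^ order z q * s" and "\<not> [:-z, 1:] dvd s"
    using order_decomp[OF q] by blast
  then have sz: "poly s z \<noteq> 0" by (simp add: poly_eq_0_iff_dvd)
  have "continuous (at z) (poly s)" by (intro continuous_intros)
  moreover have "\<bar>poly s z\<bar> / 2 > 0" using sz by simp
  ultimately obtain r where r: "r > 0"
    "\<And>x. dist x z < r \<Longrightarrow> dist (poly s x) (poly s z) < \<bar>poly s z\<bar> / 2"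
    unfolding continuous_at_eps_delta by blast
  have "\<bar>poly s z\<bar> / 2 * \<bar>x - z\<bar> ^ e \<le> \<bar>poly q x\<bar>" if x: "\<bar>x - z\<bar> < min r 1" for x
  proof -
    have "\<bar>x - z\<bar> ^ e \<le> \<bar>x - z\<bar> ^ order z q" using x e by (intro power_decreasing) auto
    moreover have "\<bar>poly s x - poly s z\<bar> < \<bar>poly s z\<bar> / 2"
      using r(2)[of x] x by (simp add: dist_real_def)
    then have "\<bar>poly s z\<bar> / 2 \<le> \<bar>poly s x\<bar>" by linarith
    ultimately have "\<bar>poly s z\<bar> / 2 * \<bar>x - z\<bar> ^ e \<le> \<bar>poly s x\<bar> * \<bar>x - z\<bar> ^ order z q"
      by (intro mult_mono) auto
    also have "\<dots> = \<bar>poly q x\<bar>"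
      by (subst (2) qs) (simp add: poly_power abs_mult power_abs)
    finally show ?thesis .
  qed
  moreover have "min r 1 > 0" "\<bar>poly s z\<bar> / 2 > 0" using r(1) sz by auto
  ultimately show ?thesis by blast
qed

lemma poly_lower_bound_near_roots:
  fixes q :: "real poly" and Z :: "real set"
  assumes q: "q \<noteq> 0" and "finite Z" and "\<And>z. z \<in> Z \<Longrightarrow> order z q \<le> e"
  shows "\<exists>\<rho>>0. \<exists>\<gamma>>0. \<forall>z\<in>Z. \<forall>x. \<bar>x - z\<bar> < \<rho> \<longrightarrow> \<gamma> * \<bar>x - z\<bar> ^ e \<le> \<bar>poly q x\<bar>"
  using assms(2,3)
proof (induction Z rule: finite_induct)
  case empty
  show ?case by (auto intro: exI[of _ 1])
next
  case (insert z Z)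
  then obtain \<rho> \<gamma> where \<rho>: "\<rho> > 0" "\<gamma> > 0"
    and near: "\<forall>w\<in>Z. \<forall>x. \<bar>x - w\<bar> < \<rho> \<longrightarrow> \<gamma> * \<bar>x - w\<bar> ^ e \<le> \<bar>poly q x\<bar>" by auto
  obtain r \<gamma>' where r: "r > 0" "\<gamma>' > 0"
    and near_z: "\<forall>x. \<bar>x - z\<bar> < r \<longrightarrow> \<gamma>' * \<bar>x - z\<bar> ^ e \<le> \<bar>poly q x\<bar>"
    using poly_lower_bound_near_root[OF q insert.prems[of z]] by auto
  have "min \<gamma> \<gamma>' * \<bar>x - w\<bar> ^ e \<le> \<bar>poly q x\<bar>"
    if w: "w \<in> insert z Z" and x: "\<bar>x - w\<bar> < min \<rho> r" for w x
  proof -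
    have "min \<gamma> \<gamma>' * \<bar>x - w\<bar> ^ e \<le> (if w = z then \<gamma>' else \<gamma>) * \<bar>x - w\<bar> ^ e"
      by (intro mult_right_mono) auto
    also have "\<dots> \<le> \<bar>poly q x\<bar>" using w x near near_z by auto
    finally show ?thesis .
  qed
  moreover have "min \<rho> r > 0" "min \<gamma> \<gamma>' > 0" using \<rho> r by auto
  ultimately show ?case by blast
qed

lemma prod_power_abs_diff_le:
  fixes Z :: "real set"
  assumes "finite Z" "z \<in> Z" "\<And>w. w \<in> Z \<Longrightarrow> \<bar>x - w\<bar> \<le> S" "1 \<le> S"
  shows "(\<Prod>w\<in>Z. \<bar>x - w\<bar> ^ e) \<le> \<bar>x - z\<bar> ^ e * S ^ (e * card Z)"
proof -
  have "(\<Prod>w\<in>Z - {z}. \<bar>x - w\<bar> ^ e) \<le> (\<Prod>w\<in>Z - {z}. S ^ e)"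
    using assms(3) by (intro prod_mono) (auto intro: power_mono)
  also have "\<dots> = S ^ (e * card (Z - {z}))" by (simp add: power_mult)
  also have "\<dots> \<le> S ^ (e * card Z)"
    using assms by (intro power_increasing) (auto intro: card_mono)
  finally show ?thesis
    using prod.remove[OF assms(1,2), of "\<lambda>w. \<bar>x - w\<bar> ^ e"] by (simp add: mult_left_mono)
qed


lemma local_bounds_imp_prod_weight_le:
  fixes Z :: "real set"
  assumes Z: "finite Z" and S: "1 \<le> S" "\<And>w. w \<in> Z \<Longrightarrow> \<bar>x - w\<bar> \<le> S"
    and e: "0 < e" and nonneg: "0 \<le> v" "0 \<le> \<mu>" "0 \<le> \<gamma>"
    and near: "\<And>z. z \<in> Z \<Longrightarrow> x \<notin> Z \<Longrightarrow> \<bar>x - z\<bar> < \<rho> \<Longrightarrow> \<gamma> * \<bar>x - z\<bar> ^ e \<le> v"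
    and away: "\<forall>z\<in>Z. \<rho> \<le> \<bar>x - z\<bar> \<Longrightarrow> \<mu> \<le> v"
  shows "min \<mu> \<gamma> / S ^ (e * card Z) * (\<Prod>z\<in>Z. \<bar>x - z\<bar> ^ e) \<le> v"
proof -
  define E where "E = S ^ (e * card Z)"
  have E: "E > 0" unfolding E_def using S(1) by simp
  have P_nonneg: "0 \<le> (\<Prod>z\<in>Z. \<bar>x - z\<bar> ^ e)" by (simp add: prod_nonneg)
  consider "x \<in> Z" | z where "z \<in> Z" "x \<notin> Z" "\<bar>x - z\<bar> < \<rho>" | "\<forall>z\<in>Z. \<rho> \<le> \<bar>x - z\<bar>"
    by (meson not_le)
  then have "min \<mu> \<gamma> / E * (\<Prod>z\<in>Z. \<bar>x - z\<bar> ^ e) \<le> v"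
  proof cases
    case 1
    then have "(\<Prod>z\<in>Z. \<bar>x - z\<bar> ^ e) = 0" using e by (intro prod_zero[OF Z] bexI[of _ x]) auto
    then show ?thesis using nonneg by simp
  next
    case (2 z)
    have "(\<Prod>z\<in>Z. \<bar>x - z\<bar> ^ e) \<le> \<bar>x - z\<bar> ^ e * E"
      using prod_power_abs_diff_le[OF Z 2(1) S(2,1)] unfolding E_def .
    moreover have "min \<mu> \<gamma> / E \<le> \<gamma> / E" using E by (intro divide_right_mono) auto
    moreover have "0 \<le> \<gamma> / E" using nonneg E by simp
    ultimately have "min \<mu> \<gamma> / E * (\<Prod>z\<in>Z. \<bar>x - z\<bar> ^ e) \<le> \<gamma> / E * (\<bar>x - z\<bar> ^ e * E)"
      using P_nonneg by (intro mult_mono)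
    also have "\<dots> = \<gamma> * \<bar>x - z\<bar> ^ e" using E by simp
    also have "\<dots> \<le> v" using near 2 by blast
    finally show ?thesis .
  next
    case 3
    have "(\<Prod>z\<in>Z. \<bar>x - z\<bar> ^ e) \<le> (\<Prod>z\<in>Z. S ^ e)"
      using S(2) by (intro prod_mono) (auto intro: power_mono)
    also have "\<dots> = E" unfolding E_def by (simp add: power_mult)
    finally have "(\<Prod>z\<in>Z. \<bar>x - z\<bar> ^ e) \<le> E" .
    moreover have "min \<mu> \<gamma> / E \<le> \<mu> / E" using E by (intro divide_right_mono) auto
    moreover have "0 \<le> \<mu> / E" using nonneg E by simp
    ultimately have "min \<mu> \<gamma> / E * (\<Prod>z\<in>Z. \<bar>x - z\<bar> ^ e) \<le> \<mu> / E * E"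
      using P_nonneg by (intro mult_mono)
    also have "\<dots> \<le> v" using away[OF 3] E by simp
    finally show ?thesis .
  qed
  then show ?thesis unfolding E_def .
qed

definition biv_poly :: "(nat \<Rightarrow> real poly) \<Rightarrow> nat \<Rightarrow> real poly poly" where
  "biv_poly c d = (\<Sum>i\<le>2*d. monom (c i) i)"

definition biv_zero_abscissas :: "(nat \<Rightarrow> real poly) \<Rightarrow> nat \<Rightarrow> real set \<Rightarrow> real set" where
  "biv_zero_abscissas c d U = {x \<in> U. \<exists>y. biv_eval c d x y = 0}"

lemma biv_eval_eq_poly2: "biv_eval c d x y = poly2 (biv_poly c d) x y"
proof -
  interpret h: map_poly_comm_ring_hom "\<lambda>q. poly q x" by unfold_locales auto
  show ?thesis unfolding poly2_def biv_eval_def biv_poly_def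
    by (simp add: h.hom_sum poly_sum poly_hom.map_poly_hom_monom poly_monom)
qed

lemma coeff_biv_poly: "coeff (biv_poly c d) j = (if j \<le> 2*d then c j else 0)"
  unfolding biv_poly_def by (simp add: coeff_sum)

lemma continuous_on_biv_eval [continuous_intros]:
  "continuous_on S f \<Longrightarrow> continuous_on S g \<Longrightarrow> continuous_on S (\<lambda>p. biv_eval c d (f p) (g p))"
  unfolding biv_eval_def by (intro continuous_intros)

lemma abs_sum_lower_powers_le:
  fixes a :: "nat \<Rightarrow> real"
  assumes y: "1 \<le> \<bar>y\<bar>" and B: "(\<Sum>i<n. \<bar>a i\<bar>) \<le> B"
  shows "\<bar>\<Sum>i<n. a i * y ^ i\<bar> \<le> B * \<bar>y\<bar> ^ (n - 1)"
proof -
  have "\<bar>\<Sum>i<n. a i * y ^ i\<bar> \<le> (\<Sum>i<n. \<bar>a i\<bar> * \<bar>y\<bar> ^ (n - 1))"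
    by (rule order_trans[OF sum_abs], rule sum_mono)
      (use y in \<open>auto simp: abs_mult power_abs intro!: mult_left_mono power_increasing\<close>)
  also have "\<dots> \<le> B * \<bar>y\<bar> ^ (n - 1)"
    unfolding sum_distrib_right[symmetric] by (rule mult_right_mono[OF B]) simp
  finally show ?thesis .
qed

lemma biv_eval_ge_leading_term:
  fixes lo B :: real
  assumes lo: "lo > 0" and lead: "lo \<le> poly (c (2*d)) x"
    and B: "(\<Sum>i<2*d. \<bar>poly (c i) x\<bar>) \<le> B" and y: "max 1 (2 * B / lo) \<le> \<bar>y\<bar>"
  shows "lo / 2 ^ Suc d * (1 + y^2) ^ d \<le> biv_eval c d x y"
proof (cases "d = 0")
  case True
  then show ?thesis using lead lo by (simp add: biv_eval_def)
next
  case False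
  have y1: "1 \<le> \<bar>y\<bar>" and yB: "2 * B \<le> lo * \<bar>y\<bar>"
    using y lo by (auto simp: field_simps)
  have split: "\<bar>y\<bar> ^ (2*d) = \<bar>y\<bar> * \<bar>y\<bar> ^ (2*d - 1)"
    using power_Suc[of "\<bar>y\<bar>" "2*d - 1"] False by simp
  have lower: "\<bar>\<Sum>i<2*d. poly (c i) x * y ^ i\<bar> \<le> B * \<bar>y\<bar> ^ (2*d - 1)"
    by (rule abs_sum_lower_powers_le[OF y1 B])
  have "lo * \<bar>y\<bar> ^ (2*d) \<le> poly (c (2*d)) x * y ^ (2*d)"
    by (simp add: power_even_abs mult_right_mono[OF lead])
  moreover have "biv_eval c d x y = poly (c (2*d)) x * y ^ (2*d) + (\<Sum>i<2*d. poly (c i) x * y ^ i)"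
    unfolding biv_eval_def lessThan_Suc_atMost[symmetric] by simp
  moreover have "- (B * \<bar>y\<bar> ^ (2*d - 1)) \<le> (\<Sum>i<2*d. poly (c i) x * y ^ i)"
    using lower by (simp add: abs_le_iff)
  moreover have "\<bar>y\<bar> ^ (2*d - 1) * (lo * \<bar>y\<bar> - B) = lo * \<bar>y\<bar> ^ (2*d) - B * \<bar>y\<bar> ^ (2*d - 1)"
    unfolding split by (simp add: algebra_simps)
  ultimately have "\<bar>y\<bar> ^ (2*d - 1) * (lo * \<bar>y\<bar> - B) \<le> biv_eval c d x y" by linarith
  moreover have "\<bar>y\<bar> ^ (2*d - 1) * (lo * \<bar>y\<bar> / 2) \<le> \<bar>y\<bar> ^ (2*d - 1) * (lo * \<bar>y\<bar> - B)"
    using yB by (intro mult_left_mono) auto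
  moreover have "lo / 2 ^ Suc d * (1 + y^2) ^ d \<le> \<bar>y\<bar> ^ (2*d - 1) * (lo * \<bar>y\<bar> / 2)"
  proof -
    have "1 \<le> y^2" using one_le_power[OF y1, of 2] by simp
    then have "(1 + y^2) ^ d \<le> (2 * y^2) ^ d" by (intro power_mono) auto
    also have "\<dots> = 2 ^ d * \<bar>y\<bar> ^ (2*d)" by (simp add: power_mult_distrib power_mult)
    finally have "lo / 2 ^ Suc d * (1 + y^2) ^ d \<le> lo / 2 ^ Suc d * (2 ^ d * \<bar>y\<bar> ^ (2*d))"
      using lo by (intro mult_left_mono) auto
    then show ?thesis unfolding split by (simp add: ac_simps)
  qed
  ultimately show ?thesis by linarith
qed

lemma biv_eval_growth:
  assumes "compact U" and lead: "\<And>x. x \<in> U \<Longrightarrow> 0 < poly (c (2*d)) x"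
  obtains \<alpha> R where "\<alpha> > 0" "\<And>x y. x \<in> U \<Longrightarrow> R \<le> \<bar>y\<bar> \<Longrightarrow> \<alpha> * (1 + y^2) ^ d \<le> biv_eval c d x y"
proof -
  have "continuous_on U (poly (c (2*d)))" by (intro continuous_intros)
  then obtain lo where lo: "lo > 0" "\<And>x. x \<in> U \<Longrightarrow> lo \<le> poly (c (2*d)) x"
    using continuous_on_compact_pos_lower_bound[of U "poly (c (2*d))"] assms(1) lead by blast
  have "continuous_on U (\<lambda>x. \<Sum>i<2*d. \<bar>poly (c i) x\<bar>)" by (intro continuous_intros)
  then obtain B where B: "\<And>x. x \<in> U \<Longrightarrow> (\<Sum>i<2*d. \<bar>poly (c i) x\<bar>) \<le> B"
    using continuous_on_compact_bounded_above[OF assms(1)] by blast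
  show thesis
  proof (rule that)
    show "lo / 2 ^ Suc d > 0" using lo by simp
    show "lo / 2 ^ Suc d * (1 + y^2) ^ d \<le> biv_eval c d x y"
      if "x \<in> U" "max 1 (2 * B / lo) \<le> \<bar>y\<bar>" for x y
      using that lo B by (intro biv_eval_ge_leading_term[where B = B]) auto
  qed
qed

lemma biv_eval_attains_min:
  assumes d: "1 \<le> d" and \<alpha>: "\<alpha> > 0"
    and growth: "\<And>y. R \<le> \<bar>y\<bar> \<Longrightarrow> \<alpha> * (1 + y^2) ^ d \<le> biv_eval c d x y"
  shows "\<exists>y0. \<forall>y. biv_eval c d x y0 \<le> biv_eval c d x y"
proof (rule continuous_attains_global_min)
  show "continuous_on UNIV (biv_eval c d x)" by (intro continuous_intros)
  fix y assume y: "max R (\<bar>biv_eval c d x 0\<bar> / \<alpha>) \<le> \<bar>y\<bar>"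
  have "0 \<le> (\<bar>y\<bar> - 1) ^ 2" by simp
  then have "\<bar>y\<bar> \<le> 1 + y^2" by (simp add: power2_diff)
  also have "\<dots> \<le> (1 + y^2) ^ d" using power_increasing[OF d, of "1 + y^2"] by simp
  finally have "\<alpha> * \<bar>y\<bar> \<le> \<alpha> * (1 + y^2) ^ d" using \<alpha> by simp
  also have "\<dots> \<le> biv_eval c d x y" using growth y by simp
  finally have "\<alpha> * \<bar>y\<bar> \<le> biv_eval c d x y" .
  moreover have "\<bar>biv_eval c d x 0\<bar> \<le> \<alpha> * \<bar>y\<bar>" using y \<alpha> by (simp add: field_simps)
  ultimately show "biv_eval c d x 0 \<le> biv_eval c d x y" by linarith
qed

lemma critical_value_lower_bound:
  fixes F G :: "real poly poly" and U :: "real set"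
  assumes U: "compact U" and G: "degree G \<ge> 1"
    and L: "\<And>x. x \<in> U \<Longrightarrow> poly (lead_coeff G) x \<noteq> 0"
  obtains q C where "q \<noteq> 0" "C > 0"
    "\<And>x y. x \<in> U \<Longrightarrow> poly2 G x y = 0 \<Longrightarrow> poly2 F x y \<noteq> 0 \<Longrightarrow> \<bar>poly q x\<bar> \<le> C * \<bar>poly2 F x y\<bar>"
proof -
  obtain ch K where monic: "lead_coeff ch = 1"
    and elim: "\<And>x y. poly2 G x y = 0 \<Longrightarrow> poly2 ch x (poly (lead_coeff G) x ^ K * poly2 F x y) = 0"
    using exists_monic_eliminant[OF G] by blast
  define j0 where "j0 = (LEAST j. coeff ch j \<noteq> 0)"
  have "coeff ch j0 \<noteq> 0"
    unfolding j0_def by (rule LeastI[of _ "degree ch"]) (simp add: monic)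
  have low: "\<And>j. j < j0 \<Longrightarrow> coeff ch j = 0" unfolding j0_def using not_less_Least by blast
  have "continuous_on U (\<lambda>x. \<Sum>j\<le>degree ch. \<bar>poly (coeff ch j) x\<bar>)" by (intro continuous_intros)
  then obtain S where S: "\<And>x. x \<in> U \<Longrightarrow> (\<Sum>j\<le>degree ch. \<bar>poly (coeff ch j) x\<bar>) \<le> S"
    using continuous_on_compact_bounded_above[OF U] by blast
  have "continuous_on U (\<lambda>x. \<bar>poly (lead_coeff G) x\<bar>)" by (intro continuous_intros)
  then obtain M where M: "\<And>x. x \<in> U \<Longrightarrow> \<bar>poly (lead_coeff G) x\<bar> \<le> M"
    using continuous_on_compact_bounded_above[OF U] by blast
  define C where "C = max M 1 ^ K * max S 1"
  have "\<bar>poly (coeff ch j0) x\<bar> \<le> C * \<bar>poly2 F x y\<bar>"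
    if x: "x \<in> U" and root: "poly2 G x y = 0" and nz: "poly2 F x y \<noteq> 0" for x y
  proof -
    define t where "t = poly (lead_coeff G) x ^ K * poly2 F x y"
    define p where "p = map_poly (\<lambda>a. poly a x) ch"
    have "\<bar>coeff p j0\<bar> \<le> \<bar>t\<bar> * (\<Sum>j\<le>degree ch. \<bar>coeff p j\<bar>)"
    proof (rule abs_lowest_coeff_le_root)
      show "coeff p j = 0" if "j < j0" for j using low[OF that] by (simp add: p_def coeff_map_poly)
      show "poly p t = 0" using elim[OF root] unfolding p_def t_def poly2_def .
      show "t \<noteq> 0" using L[OF x] nz unfolding t_def by simp
      show "degree p \<le> degree ch" unfolding p_def by (rule degree_map_poly_le)
    qed
    also have "\<dots> \<le> \<bar>t\<bar> * max S 1"
      using S[OF x] by (intro mult_left_mono) (auto simp: p_def coeff_map_poly le_max_iff_disj)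
    also have "\<dots> \<le> max M 1 ^ K * \<bar>poly2 F x y\<bar> * max S 1"
      using M[OF x] unfolding t_def abs_mult power_abs
      by (intro mult_right_mono power_mono) auto
    finally show ?thesis unfolding C_def p_def by (simp add: coeff_map_poly ac_simps)
  qed
  moreover have "C > 0" unfolding C_def by simp
  ultimately show thesis using that \<open>coeff ch j0 \<noteq> 0\<close> by blast
qed

lemma coeff_pderiv_biv_poly:
  "coeff (pderiv (biv_poly c d)) j = of_nat (Suc j) * (if Suc j \<le> 2*d then c (Suc j) else 0)"
  unfolding coeff_pderiv coeff_biv_poly ..

lemma degree_pderiv_biv_poly:
  assumes "1 \<le> d" "c (2*d) \<noteq> 0"
  shows "degree (pderiv (biv_poly c d)) = 2*d - 1"
proof (rule antisym)
  show "degree (pderiv (biv_poly c d)) \<le> 2*d - 1"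
    by (rule degree_le) (auto simp: coeff_pderiv_biv_poly)
  show "2*d - 1 \<le> degree (pderiv (biv_poly c d))"
    by (rule le_degree) (use assms in \<open>simp add: coeff_pderiv_biv_poly\<close>)
qed

lemma biv_eval_global_min_critical:
  assumes min: "\<And>y. biv_eval c d x y0 \<le> biv_eval c d x y"
  shows "poly2 (pderiv (biv_poly c d)) x y0 = 0"
proof -
  define P where "P = map_poly (\<lambda>a. poly a x) (biv_poly c d)"
  have f_eq: "biv_eval c d x y = poly P y" for y
    unfolding biv_eval_eq_poly2 poly2_def P_def ..
  have "poly (pderiv P) y0 = 0"
    by (rule DERIV_local_min[OF poly_DERIV[of P y0], of 1]) (use min in \<open>auto simp: f_eq\<close>)
  then show ?thesis unfolding poly2_def P_def poly_hom.map_poly_pderiv .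
qed

lemma biv_eval_zero_free_lower_bound:
  assumes U: "compact U" "U \<noteq> {}" and d: "1 \<le> d"
    and nonneg: "\<And>x y. x \<in> U \<Longrightarrow> 0 \<le> biv_eval c d x y"
    and lead: "\<And>x. x \<in> U \<Longrightarrow> 0 < poly (c (2*d)) x"
  obtains q C where "q \<noteq> 0" "C > 0"
    "\<And>x y. x \<in> U \<Longrightarrow> x \<notin> biv_zero_abscissas c d U \<Longrightarrow> \<bar>poly q x\<bar> \<le> C * biv_eval c d x y"
proof -
  define G where "G = pderiv (biv_poly c d)"
  have "c (2*d) \<noteq> 0" using U(2) lead by force
  then have deg_G: "degree G = 2*d - 1" unfolding G_def by (rule degree_pderiv_biv_poly[OF d])
  have L: "poly (lead_coeff G) x \<noteq> 0" if "x \<in> U" for x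
    using lead[OF that] d unfolding deg_G by (simp add: G_def coeff_pderiv_biv_poly of_nat_poly)
  have "1 \<le> degree G" using d deg_G by simp
  then obtain q C where q: "q \<noteq> 0" and C: "C > 0" and critical:
    "\<And>x y. x \<in> U \<Longrightarrow> poly2 G x y = 0 \<Longrightarrow> biv_eval c d x y \<noteq> 0 \<Longrightarrow>
      \<bar>poly q x\<bar> \<le> C * \<bar>biv_eval c d x y\<bar>"
    using critical_value_lower_bound[OF U(1) _ L, where F = "biv_poly c d"]
    unfolding biv_eval_eq_poly2 by blast
  obtain \<alpha> R where \<alpha>: "\<alpha> > 0"
    and growth: "\<And>x y. x \<in> U \<Longrightarrow> R \<le> \<bar>y\<bar> \<Longrightarrow> \<alpha> * (1 + y^2) ^ d \<le> biv_eval c d x y"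
    using biv_eval_growth[where c = c and d = d, OF U(1) lead] by blast
  show thesis
  proof (rule that[OF q C])
    fix x y assume x: "x \<in> U" and nz: "x \<notin> biv_zero_abscissas c d U"
    obtain y0 where min: "\<forall>y. biv_eval c d x y0 \<le> biv_eval c d x y"
      using biv_eval_attains_min[OF d \<alpha> growth[OF x]] by blast
    then have "poly2 G x y0 = 0" unfolding G_def by (intro biv_eval_global_min_critical) blast
    moreover have "biv_eval c d x y0 \<noteq> 0" using x nz unfolding biv_zero_abscissas_def by blast
    ultimately have "\<bar>poly q x\<bar> \<le> C * \<bar>biv_eval c d x y0\<bar>"
      using critical[OF x] by blast
    also have "\<dots> \<le> C * biv_eval c d x y"
      using min nonneg[OF x, of y0] C by simp
    finally show "\<bar>poly q x\<bar> \<le> C * biv_eval c d x y" .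
  qed
qed

lemma biv_eval_ge_away_from_zeros:
  assumes U: "compact U" and \<rho>: "\<rho> > 0"
    and nonneg: "\<And>x y. x \<in> U \<Longrightarrow> 0 \<le> biv_eval c d x y"
  obtains \<mu> where "\<mu> > 0" "\<And>x y. x \<in> U \<Longrightarrow> \<forall>z\<in>biv_zero_abscissas c d U. \<rho> \<le> \<bar>x - z\<bar> \<Longrightarrow>
      \<bar>y\<bar> \<le> R \<Longrightarrow> \<mu> \<le> biv_eval c d x y"
proof -
  define Z where "Z = biv_zero_abscissas c d U"
  define V where "V = U \<inter> (\<Inter>z\<in>Z. - ball z \<rho>)"
  have V: "x \<in> V \<longleftrightarrow> x \<in> U \<and> (\<forall>z\<in>Z. \<rho> \<le> \<bar>x - z\<bar>)" for x
    unfolding V_def by (auto simp: dist_real_def abs_minus_commute)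
  have "compact (V \<times> {-R..R})" unfolding V_def
    by (intro compact_Times compact_Int_closed U closed_INT closed_Compl ballI open_ball compact_Icc)
  moreover have "continuous_on (V \<times> {-R..R}) (\<lambda>p. biv_eval c d (fst p) (snd p))"
    by (intro continuous_intros)
  moreover have "0 < biv_eval c d (fst p) (snd p)" if p: "p \<in> V \<times> {-R..R}" for p
  proof -
    have "fst p \<in> V" using p by (simp add: mem_Times_iff)
    then have "fst p \<in> U" and far: "\<forall>z\<in>Z. \<rho> \<le> \<bar>fst p - z\<bar>" using V by auto
    moreover have "fst p \<notin> Z" using far \<rho> by fastforce
    ultimately have "biv_eval c d (fst p) (snd p) \<noteq> 0" unfolding Z_def biv_zero_abscissas_def by blast
    then show ?thesis using nonneg[OF \<open>fst p \<in> U\<close>, of "snd p"] by (simp add: less_le)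
  qed
  ultimately obtain \<mu> where \<mu>: "\<mu> > 0"
    and bound: "\<And>p. p \<in> V \<times> {-R..R} \<Longrightarrow> \<mu> \<le> biv_eval c d (fst p) (snd p)"
    using continuous_on_compact_pos_lower_bound[of "V \<times> {-R..R}" "\<lambda>p. biv_eval c d (fst p) (snd p)"]
    by blast
  show thesis
  proof (rule that[OF \<mu>])
    fix x y assume "x \<in> U" "\<forall>z\<in>biv_zero_abscissas c d U. \<rho> \<le> \<bar>x - z\<bar>" "\<bar>y\<bar> \<le> R"
    then have "(x, y) \<in> V \<times> {-R..R}" using V unfolding Z_def by auto
    then show "\<mu> \<le> biv_eval c d x y" using bound by fastforce
  qed
qed

lemma biv_eval_lower_bound_bounded_y:
  assumes U: "compact U" "U \<noteq> {}" and d: "1 \<le> d"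
    and nonneg: "\<And>x y. x \<in> U \<Longrightarrow> 0 \<le> biv_eval c d x y"
    and fin: "finite (biv_zero_abscissas c d U)"
    and lead: "\<And>x. x \<in> U \<Longrightarrow> 0 < poly (c (2*d)) x"
  obtains \<kappa> e where "\<kappa> > 0" "e > 0" "even e"
    "\<And>x y. x \<in> U \<Longrightarrow> \<bar>y\<bar> \<le> R \<Longrightarrow>
       \<kappa> * (\<Prod>z\<in>biv_zero_abscissas c d U. \<bar>x - z\<bar> ^ e) \<le> biv_eval c d x y"
proof -
  define Z where "Z = biv_zero_abscissas c d U"
  have ZU: "Z \<subseteq> U" unfolding Z_def biv_zero_abscissas_def by auto
  obtain q C where q: "q \<noteq> 0" and C: "C > 0"
    and zero_free: "\<And>x y. x \<in> U \<Longrightarrow> x \<notin> Z \<Longrightarrow> \<bar>poly q x\<bar> \<le> C * biv_eval c d x y"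
    using biv_eval_zero_free_lower_bound[OF U d nonneg lead] unfolding Z_def by blast
  define e where "e = 2 * Suc (\<Sum>z\<in>Z. order z q)"
  have "order z q \<le> e" if "z \<in> Z" for z
    using member_le_sum[OF that, of "\<lambda>z. order z q"] fin unfolding e_def Z_def by simp
  then obtain \<rho> \<gamma> where \<rho>: "\<rho> > 0" and \<gamma>: "\<gamma> > 0"
    and near: "\<And>z x. z \<in> Z \<Longrightarrow> \<bar>x - z\<bar> < \<rho> \<Longrightarrow> \<gamma> * \<bar>x - z\<bar> ^ e \<le> \<bar>poly q x\<bar>"
    using poly_lower_bound_near_roots[OF q fin[folded Z_def]] by blast
  obtain \<mu> where \<mu>: "\<mu> > 0" and away: "\<And>x y. x \<in> U \<Longrightarrow> \<forall>z\<in>Z. \<rho> \<le> \<bar>x - z\<bar> \<Longrightarrow>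
      \<bar>y\<bar> \<le> R \<Longrightarrow> \<mu> \<le> biv_eval c d x y"
    using biv_eval_ge_away_from_zeros[OF U(1) \<rho> nonneg] unfolding Z_def by blast
  have "continuous_on (U \<times> U) (\<lambda>p. \<bar>fst p - snd p\<bar>)" by (intro continuous_intros)
  then obtain S0 where S0: "\<And>p. p \<in> U \<times> U \<Longrightarrow> \<bar>fst p - snd p\<bar> \<le> S0"
    using continuous_on_compact_bounded_above[OF compact_Times[OF U(1) U(1)]] by blast
  define S where "S = max S0 1"
  have S: "\<bar>x - w\<bar> \<le> S" if "x \<in> U" "w \<in> U" for x w
    using S0[of "(x, w)"] that unfolding S_def by (simp add: le_max_iff_disj)
  have "1 \<le> S" unfolding S_def by simp
  have "0 < e" "even e" unfolding e_def by simp_all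
  define \<kappa> where "\<kappa> = min \<mu> (\<gamma> / C) / S ^ (e * card Z)"
  have "\<kappa> * (\<Prod>z\<in>Z. \<bar>x - z\<bar> ^ e) \<le> biv_eval c d x y"
    if x: "x \<in> U" and y: "\<bar>y\<bar> \<le> R" for x y
    unfolding \<kappa>_def
  proof (rule local_bounds_imp_prod_weight_le[OF fin[folded Z_def] \<open>1 \<le> S\<close> _ \<open>0 < e\<close>])
    show "\<bar>x - w\<bar> \<le> S" if "w \<in> Z" for w using S x ZU that by blast
    show "0 \<le> biv_eval c d x y" "0 \<le> \<mu>" "0 \<le> \<gamma> / C" using nonneg[OF x] \<mu> \<gamma> C by simp_all
    show "\<gamma> / C * \<bar>x - z\<bar> ^ e \<le> biv_eval c d x y" if "z \<in> Z" "x \<notin> Z" "\<bar>x - z\<bar> < \<rho>" for z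
      using near[OF that(1,3)] zero_free[OF x that(2), of y] C by (simp add: pos_divide_le_eq mult.commute)
    show "\<mu> \<le> biv_eval c d x y" if "\<forall>z\<in>Z. \<rho> \<le> \<bar>x - z\<bar>" using away[OF x that y] .
  qed
  moreover have "\<kappa> > 0" unfolding \<kappa>_def using \<mu> \<gamma> C \<open>1 \<le> S\<close> by simp
  ultimately show thesis using that[of \<kappa> e] \<open>0 < e\<close> \<open>even e\<close> unfolding Z_def by blast
qed

lemma growth_and_local_bound_imp_weight_le:
  fixes g :: "real \<Rightarrow> real"
  assumes w: "0 \<le> w" "w \<le> E" and pos: "0 < \<alpha>" "0 < \<kappa>"
    and large: "\<And>y. R \<le> \<bar>y\<bar> \<Longrightarrow> \<alpha> * (1 + y^2) ^ d \<le> g y"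
    and small: "\<And>y. \<bar>y\<bar> \<le> R \<Longrightarrow> \<kappa> * w \<le> g y"
  shows "min (\<alpha> / E) (\<kappa> / (1 + R^2) ^ d) * w * (1 + y^2) ^ d \<le> g y"
proof (cases "R \<le> \<bar>y\<bar>")
  case True
  have "min (\<alpha> / E) (\<kappa> / (1 + R^2) ^ d) * w \<le> \<alpha>"
  proof (cases "w = 0")
    case False
    then have "E > 0" using w by simp
    then have "min (\<alpha> / E) (\<kappa> / (1 + R^2) ^ d) * w \<le> \<alpha> / E * E"
      using w pos by (intro mult_mono) auto
    then show ?thesis using \<open>E > 0\<close> by simp
  qed (use pos in simp)
  then have "min (\<alpha> / E) (\<kappa> / (1 + R^2) ^ d) * w * (1 + y^2) ^ d \<le> \<alpha> * (1 + y^2) ^ d"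
    by (simp add: mult_right_mono)
  then show ?thesis using large[OF True] by simp
next
  case False
  have W0: "0 < 1 + R^2" by (simp add: add_pos_nonneg)
  then have W: "0 < (1 + R^2) ^ d" by simp
  have "(1 + y^2) ^ d \<le> (1 + R^2) ^ d"
    using False by (intro power_mono) (auto simp: abs_le_square_iff[symmetric])
  then have "min (\<alpha> / E) (\<kappa> / (1 + R^2) ^ d) * w * (1 + y^2) ^ d \<le> \<kappa> / (1 + R^2) ^ d * w * (1 + R^2) ^ d"
    using w pos W by (intro mult_mono) auto
  then show ?thesis using small[of y] False W0 by simp
qed

lemma biv_eval_ge_poly_weight:
  assumes U: "compact U" "U \<noteq> {}" and d: "1 \<le> d"
    and nonneg: "\<And>x y. x \<in> U \<Longrightarrow> biv_eval c d x y \<ge> 0"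
    and fin: "finite (biv_zero_abscissas c d U)"
    and lead: "\<And>x. x \<in> U \<Longrightarrow> poly (c (2*d)) x > 0"
  shows "\<exists>\<epsilon> :: real poly.
           (\<forall>x\<in>U. poly \<epsilon> x \<ge> 0) \<and>
           (\<forall>x\<in>U. \<forall>y. biv_eval c d x y \<ge> poly \<epsilon> x * (1 + y^2) ^ d) \<and>
           (\<forall>x\<in>U. poly \<epsilon> x = 0 \<longleftrightarrow> (\<exists>y. biv_eval c d x y = 0))"
proof -
  define Z where "Z = biv_zero_abscissas c d U"
  obtain \<alpha> R where \<alpha>: "\<alpha> > 0"
    and growth: "\<And>x y. x \<in> U \<Longrightarrow> R \<le> \<bar>y\<bar> \<Longrightarrow> \<alpha> * (1 + y^2) ^ d \<le> biv_eval c d x y"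
    using biv_eval_growth[where c = c and d = d, OF U(1) lead] by blast
  obtain \<kappa> e where \<kappa>: "\<kappa> > 0" and e: "e > 0" "even e"
    and bounded: "\<And>x y. x \<in> U \<Longrightarrow> \<bar>y\<bar> \<le> R \<Longrightarrow> \<kappa> * (\<Prod>z\<in>Z. \<bar>x - z\<bar> ^ e) \<le> biv_eval c d x y"
    using biv_eval_lower_bound_bounded_y[OF U d nonneg fin lead] unfolding Z_def by blast
  define P where "P = (\<Prod>z\<in>Z. [:-z, 1:] ^ e)"
  have poly_P: "poly P x = (\<Prod>z\<in>Z. \<bar>x - z\<bar> ^ e)" for x
    unfolding P_def using e(2) by (simp add: poly_prod poly_power power_even_abs)
  have "continuous_on U (poly P)" by (intro continuous_intros)
  then obtain E0 where E0: "\<And>x. x \<in> U \<Longrightarrow> poly P x \<le> E0"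
    using continuous_on_compact_bounded_above[OF U(1)] by blast
  define E where "E = max E0 1"
  have E: "\<And>x. x \<in> U \<Longrightarrow> poly P x \<le> E" and "E > 0"
    using E0 unfolding E_def by (auto simp: le_max_iff_disj)
  define \<delta> where "\<delta> = min (\<alpha> / E) (\<kappa> / (1 + R^2) ^ d)"
  have \<delta>: "\<delta> > 0" unfolding \<delta>_def using \<alpha> \<kappa> \<open>E > 0\<close> by (simp add: add_pos_nonneg)
  have P_nonneg: "0 \<le> poly P x" for x unfolding poly_P by (simp add: prod_nonneg)
  have "poly (Polynomial.smult \<delta> P) x * (1 + y^2) ^ d \<le> biv_eval c d x y" if x: "x \<in> U" for x y
  proof -
    have small: "\<kappa> * poly P x \<le> biv_eval c d x y'" if "\<bar>y'\<bar> \<le> R" for y'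
      using bounded[OF x that] unfolding poly_P .
    show ?thesis unfolding poly_smult \<delta>_def
      by (rule growth_and_local_bound_imp_weight_le[OF P_nonneg E[OF x] \<alpha> \<kappa> growth[OF x] small])
  qed
  moreover have "poly (Polynomial.smult \<delta> P) x = 0 \<longleftrightarrow> (\<exists>y. biv_eval c d x y = 0)" if "x \<in> U" for x
  proof -
    have "poly (Polynomial.smult \<delta> P) x = 0 \<longleftrightarrow> poly P x = 0" using \<delta> by simp
    also have "\<dots> \<longleftrightarrow> x \<in> Z"
      using e(1) unfolding poly_P prod_zero_iff[OF fin[folded Z_def]] by simp
    also have "\<dots> \<longleftrightarrow> (\<exists>y. biv_eval c d x y = 0)"
      using that unfolding Z_def biv_zero_abscissas_def by blast
    finally show ?thesis .
  qed
  moreover have "poly (Polynomial.smult \<delta> P) x \<ge> 0" for x using \<delta> P_nonneg by simp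
  ultimately show ?thesis by (intro exI[of _ "Polynomial.smult \<delta> P"] conjI ballI allI)
qed

theorem lemma4:
  fixes k d :: nat and a b :: "nat \<Rightarrow> real" and c :: "nat \<Rightarrow> real poly" and U :: "real set"
  assumes U_def: "U = (\<Union>i\<in>{1..k}. {a i..b i})"
    and ab: "\<And>i. i \<in> {1..k} \<Longrightarrow> a i \<le> b i"
    and ba: "\<And>i. i \<in> {1..<k} \<Longrightarrow> b i < a (Suc i)"
    and nonneg: "\<And>x y. x \<in> U \<Longrightarrow> biv_eval c d x y \<ge> 0"
    and fin: "finite {(x, y). x \<in> U \<and> biv_eval c d x y = 0}"
    and lead: "\<And>x. x \<in> U \<Longrightarrow> poly (c (2*d)) x > 0"
  shows "\<exists>\<epsilon> :: real poly.
           (\<forall>x\<in>U. poly \<epsilon> x \<ge> 0) \<and>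
           (\<forall>x\<in>U. \<forall>y. biv_eval c d x y \<ge> poly \<epsilon> x * (1 + y^2) ^ d) \<and>
           (\<forall>x\<in>U. poly \<epsilon> x = 0 \<longleftrightarrow> (\<exists>y. biv_eval c d x y = 0))"
proof -
  consider "U = {}" | "d = 0" | "U \<noteq> {}" "1 \<le> d" by linarith
  then show ?thesis
  proof cases
    case 1
    then show ?thesis by (intro exI[of _ 0]) auto
  next
    case 2
    then have "biv_eval c d x y = poly (c 0) x" for x y by (simp add: biv_eval_def)
    moreover have "0 < poly (c 0) x" if "x \<in> U" for x using lead[OF that] 2 by simp
    ultimately show ?thesis using 2 by (intro exI[of _ "c 0"]) (simp add: less_imp_le)
  next
    case 3
    have "compact U" unfolding U_def by (intro compact_UN compact_Icc) auto
    moreover have "biv_zero_abscissas c d U \<subseteq> fst ` {(x, y). x \<in> U \<and> biv_eval c d x y = 0}"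
      unfolding biv_zero_abscissas_def by (auto simp: image_iff)
    then have "finite (biv_zero_abscissas c d U)" using fin finite_subset by blast
    ultimately show ?thesis using biv_eval_ge_poly_weight[OF _ 3(1) 3(2) nonneg _ lead] by blast
  qed
qed

end
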